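(* Let $(R,\mathfrak{m})$ be a local integral domain satisfying (R$_1$) whose integral closure $R'$ is a generalized Krull domain, and such that $P \cap R$ is a height one prime of $R$ for every height one prime $P$ of $R'$. Let $S$ be an integral overring of $R$ such that $R \subseteq S$ satisfies going-down. Then $S$ is local.
   Context: "Local" means having a unique maximal ideal; an overring of a domain $R$ is a ring between $R$ and its fraction field. A ring extension $A \subseteq B$ satisfies going-down if whenever $\mathfrak{p} \subset \mathfrak{q}$ are primes of $A$ and $Q$ is a prime of $B$ with $Q \cap A = \mathfrak{q}$, there is a prime $P \subseteq Q$ of $B$ with $P \cap A = \mathfrak{p}$. A ring satisfies (R$_1$) if its localization at every height one prime is a valuation domain. A domain $A$ is a generalized Krull domain if (1) $A = \bigcap A_{\mathfrak{p}}$ over all height one primes $\mathfrak{p}$, (2) every nonzero element lies in only finitely many height one primes, and (3) $A$ satisfies (R$_1$). *)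

theory Defs
  imports Main
begin

text \<open>Integral domains are modelled as subrings of an ambient field of type 'a.\<close>

definition subring :: "'a::field set \<Rightarrow> bool" where
  "subring A \<longleftrightarrow> 0 \<in> A \<and> 1 \<in> A \<and> (\<forall>x\<in>A. \<forall>y\<in>A. x + y \<in> A \<and> x * y \<in> A \<and> - x \<in> A)"

definition ideal_in :: "'a::field set \<Rightarrow> 'a set \<Rightarrow> bool" where
  "ideal_in A I \<longleftrightarrow> I \<subseteq> A \<and> 0 \<in> I \<and> (\<forall>x\<in>I. \<forall>y\<in>I. x + y \<in> I) \<and> (\<forall>a\<in>A. \<forall>x\<in>I. a * x \<in> I)"

definition prime_in :: "'a::field set \<Rightarrow> 'a set \<Rightarrow> bool" where
  "prime_in A P \<longleftrightarrow> ideal_in A P \<and> P \<noteq> A \<and> (\<forall>x\<in>A. \<forall>y\<in>A. x * y \<in> P \<longrightarrow> x \<in> P \<or> y \<in> P)"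

definition maximal_in :: "'a::field set \<Rightarrow> 'a set \<Rightarrow> bool" where
  "maximal_in A M \<longleftrightarrow> ideal_in A M \<and> M \<noteq> A \<and> (\<forall>I. ideal_in A I \<and> M \<subseteq> I \<longrightarrow> I = M \<or> I = A)"

definition local_ring :: "'a::field set \<Rightarrow> bool" where
  "local_ring A \<longleftrightarrow> (\<exists>!M. maximal_in A M)"

definition height_one :: "'a::field set \<Rightarrow> 'a set \<Rightarrow> bool" where
  "height_one A P \<longleftrightarrow> prime_in A P \<and> P \<noteq> {0} \<and> (\<forall>Q. prime_in A Q \<and> Q \<subseteq> P \<longrightarrow> Q = {0} \<or> Q = P)"

definition frac :: "'a::field set \<Rightarrow> 'a set" where
  "frac A = {a / b | a b. a \<in> A \<and> b \<in> A \<and> b \<noteq> 0}"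

definition localization :: "'a::field set \<Rightarrow> 'a set \<Rightarrow> 'a set" where
  "localization A P = {a / b | a b. a \<in> A \<and> b \<in> A \<and> b \<notin> P}"

definition valuation_domain :: "'a::field set \<Rightarrow> bool" where
  "valuation_domain V \<longleftrightarrow> subring V \<and> (\<forall>x\<in>frac V. x \<noteq> 0 \<longrightarrow> x \<in> V \<or> inverse x \<in> V)"

definition integral_over :: "'a::field set \<Rightarrow> 'a \<Rightarrow> bool" where
  "integral_over A x \<longleftrightarrow> (\<exists>n c. (\<forall>i<n. c i \<in> A) \<and> x ^ n + (\<Sum>i<n. c i * x ^ i) = 0)"

definition integral_closure :: "'a::field set \<Rightarrow> 'a set" where
  "integral_closure A = {x \<in> frac A. integral_over A x}"

definition R1 :: "'a::field set \<Rightarrow> bool" where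
  "R1 A \<longleftrightarrow> (\<forall>P. height_one A P \<longrightarrow> valuation_domain (localization A P))"

definition generalized_Krull :: "'a::field set \<Rightarrow> bool" where
  "generalized_Krull A \<longleftrightarrow> subring A
     \<and> A = {x \<in> frac A. \<forall>P. height_one A P \<longrightarrow> x \<in> localization A P}
     \<and> (\<forall>x\<in>A. x \<noteq> 0 \<longrightarrow> finite {P. height_one A P \<and> x \<in> P})
     \<and> R1 A"

definition going_down :: "'a::field set \<Rightarrow> 'a set \<Rightarrow> bool" where
  "going_down A B \<longleftrightarrow> (\<forall>p q Q. prime_in A p \<and> prime_in A q \<and> p \<subset> q \<and> prime_in B Q \<and> Q \<inter> A = q
      \<longrightarrow> (\<exists>P. prime_in B P \<and> P \<subseteq> Q \<and> P \<inter> A = p))"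

end

theory Submission
  imports Defs
begin

text \<open>Since \<open>S\<close> is integral over the local ring \<open>R\<close>, every maximal ideal \<open>N\<close> of \<open>S\<close> lies
  over the maximal ideal \<open>m\<close> of \<open>R\<close>. Fix one such \<open>N\<close> and \<open>x \<in> S - N\<close>. For a height one prime
  \<open>P\<close> of \<open>R'\<close>, the prime \<open>p = P \<inter> R\<close> has height one, so \<open>R\<^sub>p\<close> is a valuation domain and
  contains \<open>S\<close>; going down gives a prime \<open>Q \<subseteq> N\<close> of \<open>S\<close> over \<open>p\<close>, and \<open>x \<notin> Q\<close> forces
  \<open>x\<^sup>-\<^sup>1 \<in> R\<^sub>p \<subseteq> R'\<^sub>P\<close>. As \<open>R'\<close> is the intersection of these localizations, \<open>x\<^sup>-\<^sup>1\<close> is integral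
  over \<open>R\<close>, hence lies in \<open>S\<close>. So every element outside \<open>N\<close> is a unit and \<open>N\<close> is the only
  maximal ideal.\<close>

section \<open>Subrings and ideals\<close>

context
  fixes A :: "'a::field set"
  assumes A: "subring A"
begin

lemma subring_zero: "0 \<in> A" and subring_one: "1 \<in> A"
  and subring_add: "x \<in> A \<Longrightarrow> y \<in> A \<Longrightarrow> x + y \<in> A"
  and subring_mult: "x \<in> A \<Longrightarrow> y \<in> A \<Longrightarrow> x * y \<in> A"
  and subring_uminus: "x \<in> A \<Longrightarrow> - x \<in> A"
  using A unfolding subring_def by blast+

lemma subring_power: "x \<in> A \<Longrightarrow> x ^ n \<in> A"
  by (induction n) (auto intro: subring_one subring_mult)

lemma subring_sum: "(\<And>i. i \<in> F \<Longrightarrow> f i \<in> A) \<Longrightarrow> sum f F \<in> A"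
  by (induction F rule: infinite_finite_induct) (auto intro: subring_zero subring_add)

lemma subring_subset_frac: "A \<subseteq> frac A"
proof
  fix x assume "x \<in> A"
  then show "x \<in> frac A"
    unfolding frac_def using subring_one by (intro CollectI exI[of _ x] exI[of _ 1]) simp
qed

end

lemma frac_mono: "A \<subseteq> B \<Longrightarrow> frac A \<subseteq> frac B"
  unfolding frac_def by blast

lemma frac_inverse:
  assumes "x \<in> frac A"
  shows "inverse x \<in> frac A"
proof -
  obtain a b where ab: "x = a / b" "a \<in> A" "b \<in> A" "b \<noteq> 0"
    using assms by (auto simp: frac_def)
  show ?thesis
  proof (cases "a = 0")
    case True
    then show ?thesis using assms ab by simp
  next
    case False
    then have "inverse x = b / a" using ab by simp
    then show ?thesis using ab False by (auto simp: frac_def)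
  qed
qed

lemma ideal_in_subset: "ideal_in A I \<Longrightarrow> x \<in> I \<Longrightarrow> x \<in> A"
  and ideal_in_zero: "ideal_in A I \<Longrightarrow> 0 \<in> I"
  and ideal_in_add: "ideal_in A I \<Longrightarrow> x \<in> I \<Longrightarrow> y \<in> I \<Longrightarrow> x + y \<in> I"
  and ideal_in_mult_left: "ideal_in A I \<Longrightarrow> a \<in> A \<Longrightarrow> x \<in> I \<Longrightarrow> a * x \<in> I"
  unfolding ideal_in_def by blast+

lemma ideal_in_mult_right: "ideal_in A I \<Longrightarrow> a \<in> A \<Longrightarrow> x \<in> I \<Longrightarrow> x * a \<in> I"
  by (metis ideal_in_mult_left mult.commute)

lemma ideal_in_uminus: "subring A \<Longrightarrow> ideal_in A I \<Longrightarrow> x \<in> I \<Longrightarrow> - x \<in> I"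
  using ideal_in_mult_left[of A I "-1" x] by (simp add: subring_one subring_uminus)

lemma ideal_in_diff: "subring A \<Longrightarrow> ideal_in A I \<Longrightarrow> x \<in> I \<Longrightarrow> y \<in> I \<Longrightarrow> x - y \<in> I"
  by (metis diff_conv_add_uminus ideal_in_add ideal_in_uminus)

lemma ideal_in_sum: "ideal_in A I \<Longrightarrow> (\<And>i. i \<in> F \<Longrightarrow> f i \<in> I) \<Longrightarrow> sum f F \<in> I"
  by (induction F rule: infinite_finite_induct) (auto intro: ideal_in_zero ideal_in_add)

lemma ideal_in_one_iff: "ideal_in A I \<Longrightarrow> 1 \<in> I \<longleftrightarrow> I = A" if "subring A"
  using that unfolding ideal_in_def by (metis mult.right_neutral subring_one subsetI subset_antisym)

lemma ideal_in_contract: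
  assumes "subring R" "R \<subseteq> S" "ideal_in S N"
  shows "ideal_in R (N \<inter> R)"
  using assms unfolding ideal_in_def by (auto intro: subring_zero subring_add subring_mult)

lemma ideal_in_power_diff:
  assumes A: "subring A" and N: "ideal_in A N" and "u \<in> A" "v \<in> A" "u - v \<in> N"
  shows "u ^ k - v ^ k \<in> N"
proof (induction k)
  case 0
  show ?case using N by (simp add: ideal_in_zero)
next
  case (Suc k)
  have "u ^ Suc k - v ^ Suc k = u * (u ^ k - v ^ k) + v ^ k * (u - v)"
    by (simp add: algebra_simps)
  also have "\<dots> \<in> N"
    using assms Suc by (intro ideal_in_add[OF N] ideal_in_mult_left[OF N] subring_power)
  finally show ?case .
qed

lemma ideal_in_monic_poly_diff:
  assumes A: "subring A" and N: "ideal_in A N" and "u \<in> A" "v \<in> A" "u - v \<in> N"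
    and d: "\<And>i. i < k \<Longrightarrow> d i \<in> A"
  shows "(u ^ k + (\<Sum>i<k. d i * u ^ i)) - (v ^ k + (\<Sum>i<k. d i * v ^ i)) \<in> N"
proof -
  have "(u ^ k + (\<Sum>i<k. d i * u ^ i)) - (v ^ k + (\<Sum>i<k. d i * v ^ i))
      = (u ^ k - v ^ k) + (\<Sum>i<k. d i * (u ^ i - v ^ i))"
    by (simp add: algebra_simps sum_subtractf)
  also have "\<dots> \<in> N"
    using assms by (intro ideal_in_add[OF N] ideal_in_sum[OF N] ideal_in_mult_left[OF N]
        ideal_in_power_diff) auto
  finally show ?thesis .
qed

section \<open>Maximal ideals\<close>

lemma ideal_in_add_principal:
  assumes A: "subring A" and N: "ideal_in A N" and x: "x \<in> A"
  shows "ideal_in A {n + x * s | n s. n \<in> N \<and> s \<in> A}"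
  unfolding ideal_in_def
proof (intro conjI ballI subsetI)
  show "0 \<in> {n + x * s | n s. n \<in> N \<and> s \<in> A}"
    using ideal_in_zero[OF N] subring_zero[OF A] by force
next
  fix y assume "y \<in> {n + x * s | n s. n \<in> N \<and> s \<in> A}"
  then show "y \<in> A"
    using A x ideal_in_subset[OF N] by (auto intro: subring_add subring_mult)
next
  fix u v assume "u \<in> {n + x * s | n s. n \<in> N \<and> s \<in> A}" "v \<in> {n + x * s | n s. n \<in> N \<and> s \<in> A}"
  then obtain n1 s1 n2 s2 where "u = n1 + x * s1" "v = n2 + x * s2"
    and "n1 \<in> N" "s1 \<in> A" "n2 \<in> N" "s2 \<in> A" by blast
  moreover have "u + v = (n1 + n2) + x * (s1 + s2)"
    using \<open>u = _\<close> \<open>v = _\<close> by (simp add: algebra_simps)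
  ultimately show "u + v \<in> {n + x * s | n s. n \<in> N \<and> s \<in> A}"
    using A N by (blast intro: ideal_in_add subring_add)
next
  fix a u assume "a \<in> A" "u \<in> {n + x * s | n s. n \<in> N \<and> s \<in> A}"
  then obtain n1 s1 where "u = n1 + x * s1" "n1 \<in> N" "s1 \<in> A" by blast
  moreover have "a * u = a * n1 + x * (a * s1)"
    using \<open>u = _\<close> by (simp add: algebra_simps)
  ultimately show "a * u \<in> {n + x * s | n s. n \<in> N \<and> s \<in> A}"
    using A N \<open>a \<in> A\<close> by (blast intro: ideal_in_mult_left subring_mult)
qed

lemma maximal_in_comaximal:
  assumes A: "subring A" and N: "maximal_in A N" and "x \<in> A" "x \<notin> N"
  obtains n s where "n \<in> N" "s \<in> A" "1 = n + x * s"
proof -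
  let ?J = "{n + x * s | n s. n \<in> N \<and> s \<in> A}"
  have idN: "ideal_in A N" using N by (simp add: maximal_in_def)
  have "N \<subseteq> ?J"
    using subring_zero[OF A] by (force intro: exI[of _ 0])
  moreover have "x \<in> ?J"
    using ideal_in_zero[OF idN] subring_one[OF A] by (force intro: exI[of _ 1])
  ultimately have "?J = A"
    using N assms(4) ideal_in_add_principal[OF A idN \<open>x \<in> A\<close>] unfolding maximal_in_def by blast
  then have "1 \<in> ?J" using subring_one[OF A] by blast
  then show ?thesis using that by blast
qed

lemma maximal_in_prime:
  assumes A: "subring A" and M: "maximal_in A M"
  shows "prime_in A M"
  unfolding prime_in_def
proof (intro conjI ballI impI)
  show idM: "ideal_in A M" and "M \<noteq> A" using M by (auto simp: maximal_in_def)
  fix x y assume "x \<in> A" "y \<in> A" "x * y \<in> M"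
  have "y \<in> M" if x: "x \<notin> M"
  proof -
    obtain n s where "n \<in> M" "s \<in> A" "1 = n + x * s"
      using maximal_in_comaximal[OF A M \<open>x \<in> A\<close> x] by blast
    then have "y = y * n + (x * y) * s"
      by (metis distrib_left mult.commute mult.left_commute mult.right_neutral)
    also have "\<dots> \<in> M"
      using ideal_in_mult_left[OF idM \<open>y \<in> A\<close> \<open>n \<in> M\<close>]
        ideal_in_mult_right[OF idM \<open>s \<in> A\<close> \<open>x * y \<in> M\<close>]
      by (rule ideal_in_add[OF idM])
    finally show "y \<in> M" .
  qed
  then show "x \<in> M \<or> y \<in> M" by blast
qed

lemma ideal_in_Union_chain:
  assumes "C \<noteq> {}" "\<And>I. I \<in> C \<Longrightarrow> ideal_in A I" "\<And>I J. I \<in> C \<Longrightarrow> J \<in> C \<Longrightarrow> I \<subseteq> J \<or> J \<subseteq> I"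
  shows "ideal_in A (\<Union>C)"
  unfolding ideal_in_def
proof (intro conjI ballI)
  show "\<Union>C \<subseteq> A" using assms(2) ideal_in_subset by blast
  show "0 \<in> \<Union>C" using assms(1,2) ideal_in_zero by blast
next
  fix x y assume "x \<in> \<Union>C" "y \<in> \<Union>C"
  then obtain Z where "Z \<in> C" "x \<in> Z" "y \<in> Z"
    using assms(3) by blast
  then show "x + y \<in> \<Union>C" using assms(2) ideal_in_add by blast
next
  fix a x assume "a \<in> A" "x \<in> \<Union>C"
  then show "a * x \<in> \<Union>C" using assms(2) ideal_in_mult_left by blast
qed

lemma proper_ideal_in_maximal:
  assumes A: "subring A" and I: "ideal_in A I" "I \<noteq> A"
  obtains M where "maximal_in A M" "I \<subseteq> M"
proof -
  define F where "F = {J. ideal_in A J \<and> I \<subseteq> J \<and> J \<noteq> A}"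
  have "\<forall>C\<in>chains F. \<exists>U\<in>F. \<forall>J\<in>C. J \<subseteq> U"
  proof
    fix C assume C: "C \<in> chains F"
    show "\<exists>U\<in>F. \<forall>J\<in>C. J \<subseteq> U"
    proof (cases "C = {}")
      case True
      then show ?thesis using I by (auto simp: F_def)
    next
      case False
      have C_F: "C \<subseteq> F" using chainsD2[OF C] .
      have "ideal_in A (\<Union>C)"
        using False C_F chainsD[OF C] by (intro ideal_in_Union_chain) (auto simp: F_def)
      moreover have "I \<subseteq> \<Union>C"
        using False C_F unfolding F_def by blast
      moreover have "1 \<notin> \<Union>C"
        using C_F ideal_in_one_iff[OF A] unfolding F_def by blast
      then have "\<Union>C \<noteq> A" using subring_one[OF A] by metis
      ultimately have "\<Union>C \<in> F" unfolding F_def by blast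
      then show ?thesis by blast
    qed
  qed
  from Zorn_Lemma2[OF this] obtain M where M: "M \<in> F" and M_max: "\<forall>J\<in>F. M \<subseteq> J \<longrightarrow> J = M"
    by blast
  have "maximal_in A M"
    unfolding maximal_in_def
  proof (intro conjI allI impI)
    show "ideal_in A M" "M \<noteq> A" using M by (simp_all add: F_def)
    fix J assume J: "ideal_in A J \<and> M \<subseteq> J"
    show "J = M \<or> J = A"
    proof (cases "J = A")
      case False
      then have "J \<in> F" using J M by (auto simp: F_def)
      then show ?thesis using M_max J by blast
    qed simp
  qed
  then show ?thesis using that M by (auto simp: F_def)
qed

lemma local_ring_proper_ideal_le:
  assumes "subring A" "local_ring A" "maximal_in A m" "ideal_in A I" "I \<noteq> A"
  shows "I \<subseteq> m"
  using assms proper_ideal_in_maximal unfolding local_ring_def by metis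

lemma local_ring_if_nonmembers_invertible:
  assumes A: "subring A" and N: "maximal_in A N"
    and inv: "\<And>x. x \<in> A \<Longrightarrow> x \<notin> N \<Longrightarrow> inverse x \<in> A"
  shows "local_ring A"
  unfolding local_ring_def
proof (intro ex1I[of _ N] N)
  fix M assume M: "maximal_in A M"
  have "M \<subseteq> N"
  proof
    fix x assume "x \<in> M"
    have idM: "ideal_in A M" and "M \<noteq> A" using M by (auto simp: maximal_in_def)
    show "x \<in> N"
    proof (rule ccontr)
      assume "x \<notin> N"
      then have "x \<noteq> 0" using ideal_in_zero N by (auto simp: maximal_in_def)
      have "inverse x * x \<in> M"
        using inv \<open>x \<notin> N\<close> \<open>x \<in> M\<close> ideal_in_subset[OF idM] by (blast intro: ideal_in_mult_left[OF idM])
      then show False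
        using \<open>x \<noteq> 0\<close> \<open>M \<noteq> A\<close> ideal_in_one_iff[OF A idM] by simp
    qed
  qed
  then show "M = N" using M N unfolding maximal_in_def by blast
qed

section \<open>Integral dependence\<close>

lemma integral_over_mono: "integral_over A x \<Longrightarrow> A \<subseteq> B \<Longrightarrow> integral_over B x"
  unfolding integral_over_def by blast

lemma subset_integral_closure:
  assumes "subring R"
  shows "R \<subseteq> integral_closure R"
proof
  fix r assume r: "r \<in> R"
  have "integral_over R r" unfolding integral_over_def
    using subring_uminus[OF assms r] by (auto intro!: exI[of _ 1] exI[of _ "\<lambda>_. - r"])
  then show "r \<in> integral_closure R"
    using subring_subset_frac[OF assms] r by (auto simp: integral_closure_def)
qed

text \<open>Multiplying the integral equation of \<open>y\<close> by \<open>y\<^sup>-\<^sup>(\<^sup>n\<^sup>-\<^sup>1\<^sup>)\<close> expresses \<open>y\<close> as a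
  polynomial in \<open>y\<^sup>-\<^sup>1\<close>.\<close>
lemma integral_over_inverse_mem:
  fixes y :: "'a::field"
  assumes V: "subring V" and "integral_over V y" and "y \<noteq> 0" and iv: "inverse y \<in> V"
  shows "y \<in> V"
proof -
  obtain n c where c: "\<forall>i<n. c i \<in> V" and eq: "y ^ n + (\<Sum>i<n. c i * y ^ i) = 0"
    using assms(2) by (auto simp: integral_over_def)
  obtain m where n: "n = Suc m" using eq by (cases n) auto
  define z where "z = inverse y"
  have zyk: "z ^ k * y ^ k = 1" for k
    using \<open>y \<noteq> 0\<close> by (simp add: z_def power_mult_distrib[symmetric])
  have summand: "z ^ m * (c i * y ^ i) = c i * z ^ (m - i)" if "i < n" for i
  proof -
    have "z ^ m = z ^ (m - i) * z ^ i" using that n by (simp flip: power_add)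
    then show ?thesis using zyk[of i] by (simp add: algebra_simps)
  qed
  have "z ^ m * y ^ n = y" using zyk[of m] by (simp add: n algebra_simps)
  moreover have "(\<Sum>i<n. z ^ m * (c i * y ^ i)) = (\<Sum>i<n. c i * z ^ (m - i))"
    using summand by (intro sum.cong) auto
  ultimately have "z ^ m * (y ^ n + (\<Sum>i<n. c i * y ^ i)) = y + (\<Sum>i<n. c i * z ^ (m - i))"
    by (simp add: distrib_left sum_distrib_left)
  then have "y = - (\<Sum>i<n. c i * z ^ (m - i))"
    using eq by (simp add: eq_neg_iff_add_eq_0)
  also have "\<dots> \<in> V"
    using V c iv by (auto intro!: subring_uminus subring_sum subring_mult subring_power simp: z_def)
  finally show ?thesis .
qed

lemma valuation_domain_integrally_closed:
  assumes V: "valuation_domain V" and "A \<subseteq> V" and x: "x \<in> frac V" "integral_over A x"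
  shows "x \<in> V"
proof (cases "x = 0")
  case True
  then show ?thesis using V by (simp add: valuation_domain_def subring_zero)
next
  case False
  then have "x \<in> V \<or> inverse x \<in> V" using V x by (simp add: valuation_domain_def)
  then show ?thesis
    using V False integral_over_mono[OF x(2) \<open>A \<subseteq> V\<close>]
    by (auto simp: valuation_domain_def intro: integral_over_inverse_mem)
qed

lemma integral_equation_scale:
  fixes s a :: "'a::comm_ring_1"
  assumes "s ^ k + (\<Sum>i<k. c i * s ^ i) = 0"
  shows "(a * s) ^ k + (\<Sum>i<k. (c i * a ^ (k - i)) * (a * s) ^ i) = 0"
proof -
  have "(c i * a ^ (k - i)) * (a * s) ^ i = a ^ k * (c i * s ^ i)" if "i < k" for i
  proof -
    have "a ^ k = a ^ (k - i) * a ^ i" using that by (simp flip: power_add)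
    then show ?thesis by (simp add: power_mult_distrib algebra_simps)
  qed
  then have "(a * s) ^ k + (\<Sum>i<k. (c i * a ^ (k - i)) * (a * s) ^ i)
      = a ^ k * (s ^ k + (\<Sum>i<k. c i * s ^ i))"
    by (simp add: distrib_left sum_distrib_left power_mult_distrib)
  then show ?thesis using assms by simp
qed

text \<open>Scaling the integral equation of \<open>s\<close> by \<open>a\<^sup>k\<close> and reducing modulo \<open>N\<close>, where
  \<open>a s \<equiv> 1\<close>.\<close>
lemma integral_equation_mod_inverse:
  assumes S: "subring S" "ideal_in S N"
    and c: "\<forall>i<k. c i \<in> S" and eq: "s ^ k + (\<Sum>i<k. c i * s ^ i) = 0"
    and as: "a \<in> S" "s \<in> S" "a * s - 1 \<in> N"
  shows "1 + (\<Sum>i<k. c i * a ^ (k - i)) \<in> N"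
proof -
  define d where "d i = c i * a ^ (k - i)" for i
  have "a * s \<in> S" using as by (blast intro: subring_mult[OF S(1)])
  moreover have "d i \<in> S" if "i < k" for i
    using c that as by (auto simp: d_def intro: subring_mult[OF S(1)] subring_power[OF S(1)])
  ultimately have "((a * s) ^ k + (\<Sum>i<k. d i * (a * s) ^ i)) - (1 ^ k + (\<Sum>i<k. d i * 1 ^ i)) \<in> N"
    using as(3) by (intro ideal_in_monic_poly_diff[OF S _ subring_one[OF S(1)]]) auto
  then have "- (1 + (\<Sum>i<k. d i)) \<in> N"
    using integral_equation_scale[OF eq, of a] by (simp add: d_def)
  from ideal_in_uminus[OF S this] show ?thesis by (simp add: d_def add.commute)
qed

text \<open>If \<open>a \<in> m\<close> were outside \<open>N\<close>, then \<open>a s \<equiv> 1\<close> modulo \<open>N\<close> for some \<open>s \<in> S\<close>, and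
  \<open>1 + \<Sum> c\<^sub>i a\<^sup>k\<^sup>-\<^sup>i \<in> N \<inter> R \<subseteq> m\<close> would give \<open>1 \<in> m\<close>.\<close>
lemma maximal_in_contract_local:
  assumes R: "subring R" "local_ring R" "maximal_in R m"
    and S: "subring S" "R \<subseteq> S" "\<forall>x\<in>S. integral_over R x"
    and N: "maximal_in S N"
  shows "N \<inter> R = m"
proof -
  have idN: "ideal_in S N" and "N \<noteq> S" and idm: "ideal_in R m" and "m \<noteq> R"
    using N R(3) by (auto simp: maximal_in_def)
  have "N \<inter> R \<noteq> R" using \<open>N \<noteq> S\<close> ideal_in_one_iff[OF S(1) idN] subring_one[OF R(1)] by blast
  then have NR_m: "N \<inter> R \<subseteq> m"
    using local_ring_proper_ideal_le[OF R] ideal_in_contract[OF R(1) S(2) idN] by blast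
  have "a \<in> N" if a: "a \<in> m" for a
  proof (rule ccontr)
    assume "a \<notin> N"
    have aR: "a \<in> R" using ideal_in_subset[OF idm a] .
    then obtain n s where "n \<in> N" "s \<in> S" and one: "1 = n + a * s"
      using maximal_in_comaximal[OF S(1) N] \<open>a \<notin> N\<close> S(2) by blast
    obtain k c where c: "\<forall>i<k. c i \<in> R" and eq: "s ^ k + (\<Sum>i<k. c i * s ^ i) = 0"
      using S(3) \<open>s \<in> S\<close> by (auto simp: integral_over_def)
    have "a * s - 1 = - n" using one by (simp add: algebra_simps)
    then have "a * s - 1 \<in> N" using ideal_in_uminus[OF S(1) idN \<open>n \<in> N\<close>] by simp
    then have "1 + (\<Sum>i<k. c i * a ^ (k - i)) \<in> N"
      using c aR S(2) \<open>s \<in> S\<close> by (intro integral_equation_mod_inverse[OF S(1) idN _ eq]) auto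
    moreover have "1 + (\<Sum>i<k. c i * a ^ (k - i)) \<in> R"
      using c aR by (auto intro!: subring_add[OF R(1)] subring_one[OF R(1)] subring_sum[OF R(1)]
          subring_mult[OF R(1)] subring_power[OF R(1)])
    ultimately have "1 + (\<Sum>i<k. c i * a ^ (k - i)) \<in> m" using NR_m by blast
    moreover have "c i * a ^ (k - i) \<in> m" if "i < k" for i
    proof -
      have "k - i = Suc (k - i - 1)" using that by simp
      then have "c i * a ^ (k - i) = (c i * a ^ (k - i - 1)) * a" by (simp add: mult.assoc flip: power_Suc2)
      moreover have "c i * a ^ (k - i - 1) \<in> R"
        using that c aR by (simp add: subring_mult[OF R(1)] subring_power[OF R(1)])
      ultimately show ?thesis using ideal_in_mult_right[OF idm _ a] by (metis mult.commute)
    qed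
    ultimately have "(1 + (\<Sum>i<k. c i * a ^ (k - i))) - (\<Sum>i<k. c i * a ^ (k - i)) \<in> m"
      by (intro ideal_in_diff[OF R(1) idm] ideal_in_sum[OF idm]) auto
    then show False using \<open>m \<noteq> R\<close> ideal_in_one_iff[OF R(1) idm] by simp
  qed
  then show ?thesis using NR_m ideal_in_subset[OF idm] by blast
qed

section \<open>Localizations\<close>

lemma subset_localization:
  assumes "subring R" "prime_in R p"
  shows "R \<subseteq> localization R p"
proof
  fix a assume "a \<in> R"
  moreover have "1 \<notin> p" using assms ideal_in_one_iff by (auto simp: prime_in_def)
  ultimately show "a \<in> localization R p"
    unfolding localization_def using subring_one[OF assms(1)] by (force intro: exI[of _ 1])
qed

lemma localization_mono:
  assumes "R \<subseteq> R'" "P \<inter> R \<subseteq> p"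
  shows "localization R p \<subseteq> localization R' P"
  using assms unfolding localization_def by blast

text \<open>If \<open>x = a / b\<close> with \<open>b \<notin> p\<close>, then \<open>a = b x \<notin> P\<close>, so \<open>a \<notin> p\<close> and \<open>x\<^sup>-\<^sup>1 = b / a\<close>.\<close>
lemma inverse_mem_localization:
  assumes "R \<subseteq> S" and P: "prime_in S P" "P \<inter> R = p"
    and x: "x \<in> S" "x \<in> localization R p" "x \<notin> P"
  shows "inverse x \<in> localization R p"
proof -
  obtain a b where ab: "x = a / b" "a \<in> R" "b \<in> R" "b \<notin> p"
    using x(2) by (auto simp: localization_def)
  have "x \<noteq> 0" using P x(3) by (auto simp: prime_in_def ideal_in_zero)
  then have "a \<noteq> 0" "b \<noteq> 0" using ab by auto
  then have "a = b * x" using ab by simp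
  then have "a \<notin> p"
    using P x ab \<open>R \<subseteq> S\<close> unfolding prime_in_def by blast
  moreover have "inverse x = b / a" using ab \<open>a \<noteq> 0\<close> by simp
  ultimately show ?thesis using ab by (auto simp: localization_def)
qed

section \<open>Going down\<close>

lemma going_down_below_maximal:
  assumes R: "subring R" "local_ring R" "maximal_in R m"
    and S: "subring S" "going_down R S" and N: "maximal_in S N" "N \<inter> R = m"
    and p: "prime_in R p"
  obtains Q where "prime_in S Q" "Q \<subseteq> N" "Q \<inter> R = p"
proof (cases "p = m")
  case True
  then show ?thesis using that maximal_in_prime[OF S(1) N(1)] N(2) by blast
next
  case False
  have "p \<subseteq> m" using local_ring_proper_ideal_le[OF R] p by (simp add: prime_in_def)
  then show ?thesis
    using that False S(2) p maximal_in_prime[OF R(1,3)] maximal_in_prime[OF S(1) N(1)] N(2)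
    unfolding going_down_def by blast
qed

lemma inverse_mem_integral_closure:
  assumes R: "subring R" "local_ring R" "maximal_in R m" "R1 R"
    and R': "generalized_Krull (integral_closure R)"
      "\<forall>P. height_one (integral_closure R) P \<longrightarrow> height_one R (P \<inter> R)"
    and S: "subring S" "R \<subseteq> S" "S \<subseteq> frac R" "\<forall>x\<in>S. integral_over R x" "going_down R S"
    and N: "maximal_in S N" "N \<inter> R = m"
    and x: "x \<in> S" "x \<notin> N"
  shows "inverse x \<in> integral_closure R"
proof -
  define R' where "R' = integral_closure R"
  have "R \<subseteq> R'" using subset_integral_closure[OF R(1)] by (simp add: R'_def)
  have "inverse x \<in> localization R' P" if P: "height_one R' P" for P
  proof -
    define p where "p = P \<inter> R"
    have "height_one R p" using R'(2) P by (simp add: p_def R'_def)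
    then have p: "prime_in R p" and val: "valuation_domain (localization R p)"
      using R(4) by (auto simp: height_one_def R1_def)
    have "S \<subseteq> frac (localization R p)"
      using S(3) frac_mono[OF subset_localization[OF R(1) p]] by blast
    then have "x \<in> localization R p"
      using valuation_domain_integrally_closed[OF val subset_localization[OF R(1) p]] S(4) x(1)
      by blast
    moreover obtain Q where "prime_in S Q" "Q \<subseteq> N" "Q \<inter> R = p"
      using going_down_below_maximal[OF R(1-3) S(1,5) N p] .
    ultimately have "inverse x \<in> localization R p"
      using inverse_mem_localization[OF S(2)] x by blast
    then show ?thesis using localization_mono[OF \<open>R \<subseteq> R'\<close>] by (auto simp: p_def)
  qed
  moreover have "inverse x \<in> frac R'"
    using frac_inverse S(3) x(1) frac_mono[OF \<open>R \<subseteq> R'\<close>] by blast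
  ultimately show ?thesis
    using R'(1) unfolding generalized_Krull_def R'_def by blast
qed

theorem lemma4p2:
  fixes R S :: "'a::field set"
  assumes "subring R"
    and "local_ring R"
    and "R1 R"
    and "generalized_Krull (integral_closure R)"
    and "\<forall>P. height_one (integral_closure R) P \<longrightarrow> height_one R (P \<inter> R)"
    and "subring S" and "R \<subseteq> S" and "S \<subseteq> frac R"
    and "\<forall>x\<in>S. integral_over R x"
    and "going_down R S"
  shows "local_ring S"
proof -
  obtain m where m: "maximal_in R m" using assms(2) by (auto simp: local_ring_def)
  have "ideal_in S {0}" "{0} \<noteq> S"
    using subring_zero[OF assms(6)] subring_one[OF assms(6)] by (auto simp: ideal_in_def)
  then obtain N where N: "maximal_in S N"
    using proper_ideal_in_maximal[OF assms(6)] by blast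
  have "N \<inter> R = m" using maximal_in_contract_local[OF assms(1,2) m assms(6,7,9) N] .
  have "inverse x \<in> S" if "x \<in> S" "x \<notin> N" for x
  proof (rule integral_over_inverse_mem[OF assms(6)])
    have "inverse x \<in> integral_closure R"
      using inverse_mem_integral_closure[OF assms(1,2) m assms(3-10) N \<open>N \<inter> R = m\<close> that] .
    then show "integral_over S (inverse x)"
      using assms(7) by (auto simp: integral_closure_def intro: integral_over_mono)
    show "inverse x \<noteq> 0" and "inverse (inverse x) \<in> S"
      using that N ideal_in_zero by (auto simp: maximal_in_def)
  qed
  then show ?thesis using local_ring_if_nonmembers_invertible[OF assms(6) N] by blast
qed

end
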